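(* Let $\lambda$ be a partition and $\sigma:\operatorname{dg}(\lambda)\to\mathbb{Z}_{>0}$ any filling. For every positive integer $k$, $$\sum_{\substack{u\in\operatorname{dg}(\lambda)\\ \sigma(u)=k\ne\sigma(\mathrm N(u))}} t^{\operatorname{up}(\sigma,u)}=\sum_{\substack{u\in\operatorname{dg}(\lambda)\\ \sigma(u)=k\ne\sigma(\mathrm S(u))}} t^{\operatorname{down}(\sigma,u)}$$ as polynomials in $t$.
   Context: $\operatorname{dg}(\lambda)=\{(r,i):1\le i\le\ell(\lambda),\ 1\le r\le\lambda_i\}$ (row $r$ counted from the bottom, column $i$ from the left). For a cell $u=(r,c)$: $\mathrm S(u)=(r-1,c)$ and $\mathrm N(u)=(r+1,c)$; by convention $\sigma(\mathrm S(u))=\infty$ if $r=1$ and $\sigma(\mathrm N(u))=0$ if $r=\lambda_c$. The lower arm is $\operatorname{arm}(u)=\{(r,j)\in\operatorname{dg}(\lambda):j<c\}\cup\{(r-1,j)\in\operatorname{dg}(\lambda):j>c\}$ and the upper arm is $\operatorname{uarm}(u)=\{(r+1,j)\in\operatorname{dg}(\lambda):j<c\}\cup\{(r,j)\in\operatorname{dg}(\lambda):j>c\}$. Define $\operatorname{down}(\sigma,u)=\#\{y\in\operatorname{arm}(u):\sigma(y)=\sigma(u)\}$ when $\sigma(\mathrm S(u))\ne\sigma(u)$, and $\operatorname{up}(\sigma,u)=\#\{y\in\operatorname{uarm}(u):\sigma(y)=\sigma(u)\}$ when $\sigma(\mathrm N(u))\ne\sigma(u)$ (only these cases occur in the sums).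 *)

theory Defs
  imports "HOL-Computational_Algebra.Polynomial" "HOL-Library.Extended_Nat"
begin

definition is_partition :: "nat list \<Rightarrow> bool" where
  "is_partition lam \<longleftrightarrow> sorted (rev lam) \<and> (\<forall>x\<in>set lam. 0 < x)"

text \<open>Cells are pairs (r, i): row r (from the bottom), column i (from the left), 1-based.\<close>
definition dg :: "nat list \<Rightarrow> (nat \<times> nat) set" where
  "dg lam = {(r, i). 1 \<le> i \<and> i \<le> length lam \<and> 1 \<le> r \<and> r \<le> lam ! (i - 1)}"

definition sigma_S :: "nat list \<Rightarrow> (nat \<times> nat \<Rightarrow> nat) \<Rightarrow> nat \<times> nat \<Rightarrow> enat" where
  "sigma_S lam \<sigma> u = (case u of (r, c) \<Rightarrow> if r = 1 then \<infinity> else enat (\<sigma> (r - 1, c)))"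

definition sigma_N :: "nat list \<Rightarrow> (nat \<times> nat \<Rightarrow> nat) \<Rightarrow> nat \<times> nat \<Rightarrow> enat" where
  "sigma_N lam \<sigma> u = (case u of (r, c) \<Rightarrow> if r = lam ! (c - 1) then 0 else enat (\<sigma> (r + 1, c)))"

definition arm :: "nat list \<Rightarrow> nat \<times> nat \<Rightarrow> (nat \<times> nat) set" where
  "arm lam u = (case u of (r, c) \<Rightarrow>
     {(r', j). (r', j) \<in> dg lam \<and> ((r' = r \<and> j < c) \<or> (r' + 1 = r \<and> j > c))})"

definition uarm :: "nat list \<Rightarrow> nat \<times> nat \<Rightarrow> (nat \<times> nat) set" where
  "uarm lam u = (case u of (r, c) \<Rightarrow>
     {(r', j). (r', j) \<in> dg lam \<and> ((r' = r + 1 \<and> j < c) \<or> (r' = r \<and> j > c))})"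

definition down :: "nat list \<Rightarrow> (nat \<times> nat \<Rightarrow> nat) \<Rightarrow> nat \<times> nat \<Rightarrow> nat" where
  "down lam \<sigma> u = card {y \<in> arm lam u. \<sigma> y = \<sigma> u}"

definition up :: "nat list \<Rightarrow> (nat \<times> nat \<Rightarrow> nat) \<Rightarrow> nat \<times> nat \<Rightarrow> nat" where
  "up lam \<sigma> u = card {y \<in> uarm lam u. \<sigma> y = \<sigma> u}"

end

theory Submission
  imports Defs
begin

text \<open>Number the cells in reading order, row by row from the bottom, with L = length lam
  cells per row. Then N(u) has the index of u plus L, the upper arm of u consists of the cells
  whose index lies strictly between that of u and that of N(u), and the lower arm of those strictly
  between S(u) and u. Slide a window of L consecutive indices across the diagram and let C count
  the cells of colour k inside it. Each shift changes C by at most one: C drops as the window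
  leaves a cell u of colour k with \<sigma>(N(u)) \<noteq> k, the new value being up(\<sigma>, u), and C rises as the
  window reaches a cell u of colour k with \<sigma>(S(u)) \<noteq> k, the old value being down(\<sigma>, u). As the
  window is empty at both ends, the descents and ascents of C pair up level by level, so the two
  sums of t to the power of these levels agree.\<close>

lemma sum_descents_eq_sum_ascents:
  fixes f :: "nat \<Rightarrow> nat" and g :: "nat \<Rightarrow> 'a::ab_group_add"
  assumes steps: "\<And>i. i < N \<Longrightarrow> f (Suc i) = f i \<or> f (Suc i) = Suc (f i) \<or> Suc (f (Suc i)) = f i"
    and closed: "f N = f 0"
  shows "(\<Sum>i\<in>{i\<in>{..<N}. Suc (f (Suc i)) = f i}. g (f (Suc i)))
       = (\<Sum>i\<in>{i\<in>{..<N}. f (Suc i) = Suc (f i)}. g (f i))"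
proof -
  define G where "G n = (\<Sum>h<n. g h)" for n
  have "0 = G (f N) - G (f 0)" using closed by simp
  also have "\<dots> = (\<Sum>i<N. G (f (Suc i)) - G (f i))"
    by (rule sum_lessThan_telescope[symmetric])
  also have "\<dots> = (\<Sum>i<N. (if f (Suc i) = Suc (f i) then g (f i) else 0)
                      - (if Suc (f (Suc i)) = f i then g (f (Suc i)) else 0))"
  proof (rule sum.cong)
    fix i assume "i \<in> {..<N}"
    then consider "f (Suc i) = f i" | "f (Suc i) = Suc (f i)" | "Suc (f (Suc i)) = f i"
      using steps by auto
    then show "G (f (Suc i)) - G (f i) = (if f (Suc i) = Suc (f i) then g (f i) else 0)
                      - (if Suc (f (Suc i)) = f i then g (f (Suc i)) else 0)"
    proof cases
      case 3
      then have "f i = Suc (f (Suc i))" by simp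
      then show ?thesis by (simp add: G_def)
    qed (auto simp: G_def)
  qed simp
  also have "\<dots> = (\<Sum>i\<in>{i\<in>{..<N}. f (Suc i) = Suc (f i)}. g (f i))
                - (\<Sum>i\<in>{i\<in>{..<N}. Suc (f (Suc i)) = f i}. g (f (Suc i)))"
    by (simp only: sum_subtractf sum.inter_filter[OF finite_lessThan])
  finally show ?thesis by simp
qed

definition index_window :: "nat set \<Rightarrow> nat \<Rightarrow> nat \<Rightarrow> nat set" where
  "index_window J L i = {x \<in> J. i \<le> x \<and> x < i + L}"

lemma card_index_window_Suc:
  assumes "finite J"
  shows "card (index_window J L (Suc i)) + (if i \<in> J then 1 else 0)
       = card (index_window J L i) + (if i + L \<in> J then 1 else 0)"
proof -
  have fin: "finite (index_window J L j)" for j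
    using assms by (simp add: index_window_def)
  have "card (index_window J L (Suc i)) + card ({i} \<inter> J)
      = card (index_window J L (Suc i) \<union> ({i} \<inter> J))"
    by (rule card_Un_disjoint[symmetric]) (auto simp: fin index_window_def)
  also have "index_window J L (Suc i) \<union> ({i} \<inter> J) = index_window J L i \<union> ({i + L} \<inter> J)"
    by (auto simp: index_window_def)
  also have "card \<dots> = card (index_window J L i) + card ({i + L} \<inter> J)"
    by (rule card_Un_disjoint) (auto simp: fin index_window_def)
  finally show ?thesis by (cases "i \<in> J"; cases "i + L \<in> J") simp_all
qed

lemma index_window_eq: "i \<notin> J \<Longrightarrow> index_window J L i = {x \<in> J. i < x \<and> x < i + L}"
  by (auto simp: index_window_def order.order_iff_strict)

lemma index_window_Suc_eq:
  "i + L \<notin> J \<Longrightarrow> index_window J L (Suc i) = {x \<in> J. i < x \<and> x < i + L}"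
  by (auto simp: index_window_def less_Suc_eq)

lemma sum_tops_eq_sum_bottoms:
  fixes J :: "nat set" and g :: "nat \<Rightarrow> 'a::ab_group_add"
  assumes fin: "finite J" and above: "\<forall>j\<in>J. L \<le> j"
  shows "(\<Sum>j\<in>{j \<in> J. j + L \<notin> J}. g (card {i \<in> J. j < i \<and> i < j + L}))
       = (\<Sum>j\<in>{j \<in> J. j \<notin> (\<lambda>i. i + L) ` J}. g (card {i \<in> J. j < i + L \<and> i < j}))"
proof -
  define C where "C i = card (index_window J L i)" for i
  obtain N where N: "\<forall>j\<in>J. j < N"
    using fin finite_nat_set_iff_bounded by blast
  have step: "C (Suc i) + (if i \<in> J then 1 else 0) = C i + (if i + L \<in> J then 1 else 0)" for i
    unfolding C_def by (rule card_index_window_Suc[OF fin])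
  have C0: "C 0 = 0" and CN: "C N = 0"
    using above N by (auto simp: C_def index_window_def)
  have unit_steps: "C (Suc i) = C i \<or> C (Suc i) = Suc (C i) \<or> Suc (C (Suc i)) = C i" for i
    using step[of i] by (auto split: if_splits)
  have descent_iff: "Suc (C (Suc i)) = C i \<longleftrightarrow> i \<in> J \<and> i + L \<notin> J" for i
    using step[of i] by (auto split: if_splits)
  have ascent_iff: "C (Suc i) = Suc (C i) \<longleftrightarrow> i + L \<in> J \<and> i \<notin> J" for i
    using step[of i] by (auto split: if_splits)
  have tops: "{j \<in> J. j + L \<notin> J} = {i \<in> {..<N}. Suc (C (Suc i)) = C i}"
    using N descent_iff by auto
  have bottoms: "{j \<in> J. j \<notin> (\<lambda>i. i + L) ` J} = (\<lambda>i. i + L) ` {i \<in> {..<N}. C (Suc i) = Suc (C i)}"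
  proof -
    have "j \<in> (\<lambda>i. i + L) ` {i \<in> {..<N}. i + L \<in> J \<and> i \<notin> J}" if "j \<in> J" "j \<notin> (\<lambda>i. i + L) ` J" for j
      using that above N by (auto intro!: image_eqI[of j _ "j - L"])
    then show ?thesis
      unfolding ascent_iff using N by fastforce
  qed
  have "(\<Sum>j\<in>{j \<in> J. j + L \<notin> J}. g (card {i \<in> J. j < i \<and> i < j + L}))
      = (\<Sum>i\<in>{i \<in> {..<N}. Suc (C (Suc i)) = C i}. g (C (Suc i)))"
    unfolding tops using descent_iff by (intro sum.cong) (auto simp: C_def index_window_Suc_eq)
  also have "\<dots> = (\<Sum>i\<in>{i \<in> {..<N}. C (Suc i) = Suc (C i)}. g (C i))"
    using unit_steps C0 CN by (intro sum_descents_eq_sum_ascents) auto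
  also have "\<dots> = (\<Sum>i\<in>{i \<in> {..<N}. C (Suc i) = Suc (C i)}. g (card {x \<in> J. i < x \<and> x < i + L}))"
    using ascent_iff by (intro sum.cong) (auto simp: C_def index_window_eq)
  also have "\<dots> = (\<Sum>j\<in>{j \<in> J. j \<notin> (\<lambda>i. i + L) ` J}. g (card {i \<in> J. j < i + L \<and> i < j}))"
    unfolding bottoms by (simp add: sum.reindex inj_on_def)
  finally show ?thesis .
qed

definition cell_index :: "nat \<Rightarrow> nat \<times> nat \<Rightarrow> nat" where
  "cell_index L = (\<lambda>(r, c). r * L + (c - 1))"

lemma cell_index_Suc_row [simp]: "cell_index L (Suc r, c) = cell_index L (r, c) + L"
  by (simp add: cell_index_def)

lemma le_cell_index: "1 \<le> r \<Longrightarrow> L \<le> cell_index L (r, c)"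
  using mult_le_mono1[of 1 r L] by (auto simp: cell_index_def intro: trans_le_add1)

lemma cell_index_less_iff:
  assumes "1 \<le> c" "c \<le> L" "1 \<le> c'" "c' \<le> L"
  shows "cell_index L (r, c) < cell_index L (r', c') \<longleftrightarrow> r < r' \<or> r = r' \<and> c < c'"
proof
  assume less: "cell_index L (r, c) < cell_index L (r', c')"
  show "r < r' \<or> r = r' \<and> c < c'"
  proof (rule ccontr)
    assume "\<not> ?thesis"
    then consider "r' < r" | "r' = r" "c' \<le> c" by linarith
    then show False
    proof cases
      case 1
      then have "r' * L + L \<le> r * L"
        by (metis add.commute mult_Suc mult_le_mono1 Suc_leI)
      then show False using less assms by (simp add: cell_index_def)
    qed (use less assms in \<open>simp add: cell_index_def\<close>)
  qed
next
  assume "r < r' \<or> r = r' \<and> c < c'"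
  then consider "r < r'" | "r = r'" "c < c'" by blast
  then show "cell_index L (r, c) < cell_index L (r', c')"
  proof cases
    case 1
    then have "r * L + L \<le> r' * L"
      by (metis add.commute mult_Suc mult_le_mono1 Suc_leI)
    then show ?thesis using assms by (simp add: cell_index_def)
  qed (use assms in \<open>simp add: cell_index_def\<close>)
qed

lemma inj_on_cell_index: "inj_on (cell_index L) {u. 1 \<le> snd u \<and> snd u \<le> L}"
proof (rule inj_onI)
  fix u v
  assume "u \<in> {u. 1 \<le> snd u \<and> snd u \<le> L}" "v \<in> {u. 1 \<le> snd u \<and> snd u \<le> L}"
    and eq: "cell_index L u = cell_index L v"
  moreover obtain r c r' c' where uv: "u = (r, c)" "v = (r', c')" by fastforce
  ultimately have "\<not> (r < r' \<or> r = r' \<and> c < c')" "\<not> (r' < r \<or> r' = r \<and> c' < c)"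
    using cell_index_less_iff[of c L c' r r'] cell_index_less_iff[of c' L c r' r] by auto
  then show "u = v" using uv by auto
qed

lemma dg_column_bounds: "u \<in> dg lam \<Longrightarrow> 1 \<le> snd u \<and> snd u \<le> length lam"
  by (auto simp: dg_def)

lemma inj_on_cell_index_dg: "inj_on (cell_index (length lam)) (dg lam)"
  by (rule inj_on_subset[OF inj_on_cell_index]) (auto dest: dg_column_bounds)

lemma finite_dg: "finite (dg lam)"
proof (rule finite_subset)
  show "dg lam \<subseteq> {..sum_list lam} \<times> {..length lam}"
    by (auto simp: dg_def intro: order.trans[OF _ elem_le_sum_list])
qed simp

lemma uarm_iff_cell_index:
  assumes "u \<in> dg lam" "y \<in> dg lam"
  shows "y \<in> uarm lam u \<longleftrightarrow>
           cell_index (length lam) u < cell_index (length lam) y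
         \<and> cell_index (length lam) y < cell_index (length lam) u + length lam"
proof -
  obtain r c r' c' where uy: "u = (r, c)" "y = (r', c')" by fastforce
  have "1 \<le> c" "c \<le> length lam" "1 \<le> c'" "c' \<le> length lam"
    using assms uy dg_column_bounds by fastforce+
  then show ?thesis
    using assms uy cell_index_less_iff[of c "length lam" c' r r']
      cell_index_less_iff[of c' "length lam" c r' "Suc r"]
    by (auto simp: uarm_def)
qed

lemma arm_iff_cell_index:
  assumes "u \<in> dg lam" "y \<in> dg lam"
  shows "y \<in> arm lam u \<longleftrightarrow>
           cell_index (length lam) u < cell_index (length lam) y + length lam
         \<and> cell_index (length lam) y < cell_index (length lam) u"
proof -
  obtain r c r' c' where uy: "u = (r, c)" "y = (r', c')" by fastforce
  have "1 \<le> c" "c \<le> length lam" "1 \<le> c'" "c' \<le> length lam"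
    using assms uy dg_column_bounds by fastforce+
  then show ?thesis
    using assms uy cell_index_less_iff[of c "length lam" c' r "Suc r'"]
      cell_index_less_iff[of c' "length lam" c r' r]
    by (auto simp: arm_def)
qed

lemma cell_index_mem_image_dg_iff:
  assumes "1 \<le> c" "c \<le> length lam" "K \<subseteq> dg lam"
  shows "cell_index (length lam) (r, c) \<in> cell_index (length lam) ` K \<longleftrightarrow> (r, c) \<in> K"
proof -
  have "K \<subseteq> {u. 1 \<le> snd u \<and> snd u \<le> length lam}"
    using assms(3) dg_column_bounds by blast
  then show ?thesis
    using assms(1,2) by (intro inj_on_image_mem_iff[OF inj_on_cell_index]) auto
qed

lemma sigma_N_eq_iff_cell_index:
  assumes "u \<in> dg lam" "0 < k"
  shows "sigma_N lam \<sigma> u = enat k \<longleftrightarrow>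
           cell_index (length lam) u + length lam \<in> cell_index (length lam) ` {y \<in> dg lam. \<sigma> y = k}"
proof -
  obtain r c where u: "u = (r, c)" by fastforce
  have c: "1 \<le> c" "c \<le> length lam"
    using assms u dg_column_bounds by fastforce+
  then have "cell_index (length lam) u + length lam \<in> cell_index (length lam) ` {y \<in> dg lam. \<sigma> y = k}
          \<longleftrightarrow> (Suc r, c) \<in> dg lam \<and> \<sigma> (Suc r, c) = k"
    unfolding u cell_index_Suc_row[symmetric] by (subst cell_index_mem_image_dg_iff) auto
  then show ?thesis
    using assms u c by (auto simp: sigma_N_def dg_def zero_enat_def)
qed

lemma sigma_S_eq_iff_cell_index:
  assumes "u \<in> dg lam"
  shows "sigma_S lam \<sigma> u = enat k \<longleftrightarrow>
           cell_index (length lam) u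
             \<in> (\<lambda>i. i + length lam) ` cell_index (length lam) ` {y \<in> dg lam. \<sigma> y = k}"
proof -
  obtain r c where u: "u = (Suc r, c)"
    using assms by (cases u) (auto simp: dg_def dest!: Suc_le_D)
  have c: "1 \<le> c" "c \<le> length lam"
    using assms u dg_column_bounds by fastforce+
  have "cell_index (length lam) u
          \<in> (\<lambda>i. i + length lam) ` cell_index (length lam) ` {y \<in> dg lam. \<sigma> y = k}
        \<longleftrightarrow> cell_index (length lam) (r, c) \<in> cell_index (length lam) ` {y \<in> dg lam. \<sigma> y = k}"
    unfolding u cell_index_Suc_row by (rule inj_image_mem_iff) (simp add: inj_def)
  also have "\<dots> \<longleftrightarrow> (r, c) \<in> dg lam \<and> \<sigma> (r, c) = k"
    using c by (subst cell_index_mem_image_dg_iff) auto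
  finally show ?thesis
    using assms u c by (auto simp: sigma_S_def dg_def)
qed

lemma up_eq_card_cell_index:
  assumes "u \<in> dg lam"
  shows "up lam \<sigma> u = card {i \<in> cell_index (length lam) ` {y \<in> dg lam. \<sigma> y = \<sigma> u}.
           cell_index (length lam) u < i \<and> i < cell_index (length lam) u + length lam}"
proof -
  let ?idx = "cell_index (length lam)"
  have "{y \<in> uarm lam u. \<sigma> y = \<sigma> u}
      = {y \<in> dg lam. \<sigma> y = \<sigma> u \<and> ?idx u < ?idx y \<and> ?idx y < ?idx u + length lam}"
    using uarm_iff_cell_index[OF assms] by (auto simp: uarm_def)
  then have "card {y \<in> uarm lam u. \<sigma> y = \<sigma> u}
      = card (?idx ` {y \<in> dg lam. \<sigma> y = \<sigma> u \<and> ?idx u < ?idx y \<and> ?idx y < ?idx u + length lam})"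
    by (simp add: card_image inj_on_subset[OF inj_on_cell_index_dg])
  also have "?idx ` {y \<in> dg lam. \<sigma> y = \<sigma> u \<and> ?idx u < ?idx y \<and> ?idx y < ?idx u + length lam}
      = {i \<in> ?idx ` {y \<in> dg lam. \<sigma> y = \<sigma> u}. ?idx u < i \<and> i < ?idx u + length lam}"
    by blast
  finally show ?thesis
    unfolding up_def .
qed

lemma down_eq_card_cell_index:
  assumes "u \<in> dg lam"
  shows "down lam \<sigma> u = card {i \<in> cell_index (length lam) ` {y \<in> dg lam. \<sigma> y = \<sigma> u}.
           cell_index (length lam) u < i + length lam \<and> i < cell_index (length lam) u}"
proof -
  let ?idx = "cell_index (length lam)"
  have "{y \<in> arm lam u. \<sigma> y = \<sigma> u}
      = {y \<in> dg lam. \<sigma> y = \<sigma> u \<and> ?idx u < ?idx y + length lam \<and> ?idx y < ?idx u}"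
    using arm_iff_cell_index[OF assms] by (auto simp: arm_def)
  then have "card {y \<in> arm lam u. \<sigma> y = \<sigma> u}
      = card (?idx ` {y \<in> dg lam. \<sigma> y = \<sigma> u \<and> ?idx u < ?idx y + length lam \<and> ?idx y < ?idx u})"
    by (simp add: card_image inj_on_subset[OF inj_on_cell_index_dg])
  also have "?idx ` {y \<in> dg lam. \<sigma> y = \<sigma> u \<and> ?idx u < ?idx y + length lam \<and> ?idx y < ?idx u}
      = {i \<in> ?idx ` {y \<in> dg lam. \<sigma> y = \<sigma> u}. ?idx u < i + length lam \<and> i < ?idx u}"
    by blast
  finally show ?thesis
    unfolding down_def .
qed

theorem lemma4p2:
  fixes lam :: "nat list" and \<sigma> :: "nat \<times> nat \<Rightarrow> nat" and k :: nat
  assumes "is_partition lam"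
    and "\<forall>u\<in>dg lam. 0 < \<sigma> u"
    and "0 < k"
  shows "(\<Sum>u\<in>{u \<in> dg lam. \<sigma> u = k \<and> sigma_N lam \<sigma> u \<noteq> enat k}.
            monom (1::int) (up lam \<sigma> u))
       = (\<Sum>u\<in>{u \<in> dg lam. \<sigma> u = k \<and> sigma_S lam \<sigma> u \<noteq> enat k}.
            monom (1::int) (down lam \<sigma> u))"
proof -
  define L where "L = length lam"
  define K where "K = {u \<in> dg lam. \<sigma> u = k}"
  define J where "J = cell_index L ` K"
  have inj: "inj_on (cell_index L) K"
    unfolding K_def L_def by (rule inj_on_subset[OF inj_on_cell_index_dg]) auto
  have fin: "finite J"
    using finite_dg by (simp add: J_def K_def)
  have above: "\<forall>j\<in>J. L \<le> j"
    by (auto simp: J_def K_def dg_def le_cell_index)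
  have tops: "{j \<in> J. j + L \<notin> J}
      = cell_index L ` {u \<in> dg lam. \<sigma> u = k \<and> sigma_N lam \<sigma> u \<noteq> enat k}"
    using sigma_N_eq_iff_cell_index[OF _ \<open>0 < k\<close>] by (auto simp: J_def K_def L_def)
  have bottoms: "{j \<in> J. j \<notin> (\<lambda>i. i + L) ` J}
      = cell_index L ` {u \<in> dg lam. \<sigma> u = k \<and> sigma_S lam \<sigma> u \<noteq> enat k}"
    using sigma_S_eq_iff_cell_index by (auto simp: J_def K_def L_def)
  have up: "up lam \<sigma> u = card {i \<in> J. cell_index L u < i \<and> i < cell_index L u + L}"
    and down: "down lam \<sigma> u = card {i \<in> J. cell_index L u < i + L \<and> i < cell_index L u}"
    if "u \<in> K" for u
    using that up_eq_card_cell_index down_eq_card_cell_index by (auto simp: J_def K_def L_def)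
  have "(\<Sum>u\<in>{u \<in> dg lam. \<sigma> u = k \<and> sigma_N lam \<sigma> u \<noteq> enat k}. monom (1::int) (up lam \<sigma> u))
      = (\<Sum>j\<in>{j \<in> J. j + L \<notin> J}. monom 1 (card {i \<in> J. j < i \<and> i < j + L}))"
    using up by (intro sum.reindex_cong[OF _ tops, symmetric] inj_on_subset[OF inj]) (auto simp: K_def)
  also have "\<dots> = (\<Sum>j\<in>{j \<in> J. j \<notin> (\<lambda>i. i + L) ` J}. monom 1 (card {i \<in> J. j < i + L \<and> i < j}))"
    using fin above by (rule sum_tops_eq_sum_bottoms)
  also have "\<dots> = (\<Sum>u\<in>{u \<in> dg lam. \<sigma> u = k \<and> sigma_S lam \<sigma> u \<noteq> enat k}. monom 1 (down lam \<sigma> u))"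
    using down by (intro sum.reindex_cong[OF _ bottoms] inj_on_subset[OF inj]) (auto simp: K_def)
  finally show ?thesis .
qed

end
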